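(* For every positive integer $b_1$ there exists $r^*_{b_1}\in[0,1]$ such that for every positive integer $b_2<m^*$ and every Nash equilibrium $\sigma^*$ of $\Gamma(b_1,b_2)$ whose attack strategy is supported on nonempty attack plans, $r(\sigma^* )=r^*_{b_1}$. (When $b_1<n^*$, every Nash equilibrium has attack strategy supported on plans of size $b_2$, and then $U_1(\sigma^* )=b_2r^*_{b_1}$ and $U_2(\sigma^* )=b_2(1-r^*_{b_1})$.)
   Context: Detection model: finite nonempty sets $\mathcal V$, $\mathcal E$, monitoring sets $\mathcal C_i\subseteq\mathcal E$ ($i\in\mathcal V$) with every $e\in\mathcal E$ in some $\mathcal C_i$; $\mathcal C_S=\bigcup_{i\in S}\mathcal C_i$; $F(S,T)=|\mathcal C_S\cap T|$. Set cover: $S\subseteq\mathcal V$ with $\mathcal C_S=\mathcal E$; $n^*$ = minimum size of a set cover. Set packing: $T\subseteq\mathcal E$ with $|\mathcal C_i\cap T|\le1$ for all $i$; $m^*$ = maximum size of a set packing. Game $\Gamma(b_1,b_2)$ ($b_1,b_2$ positive integers): $\mathcal A_1=\{S\subseteq\mathcal V:|S|\le b_1\}$, $\mathcal A_2=\{T\subseteq\mathcal E:|T|\le b_2\}$; mixed strategies $\sigma^1\in\Delta(\mathcal A_1)$, $\sigma^2\in\Delta(\mathcal A_2)$ (independent); payoffs $U_1=\mathbb E[F(S,T)]$, $U_2=\mathbb E[|T|]-\mathbb E[F(S,T)]$; Nash equilibrium as usual. Expected detection rate $r(\sigma)=\mathbb E_{S\sim\sigma^1,T\sim\sigma^2}[F(S,T)/|T|]$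 for profiles whose attack strategy is supported on nonempty sets. *)

theory Defs
  imports "HOL-Probability.Probability_Mass_Function"
begin

definition detection_model :: "'v set \<Rightarrow> 'e set \<Rightarrow> ('v \<Rightarrow> 'e set) \<Rightarrow> bool" where
  "detection_model V E C \<longleftrightarrow> finite V \<and> V \<noteq> {} \<and> finite E \<and> E \<noteq> {} \<and>
     (\<forall>i\<in>V. C i \<subseteq> E) \<and> (\<forall>e\<in>E. \<exists>i\<in>V. e \<in> C i)"

definition CS :: "('v \<Rightarrow> 'e set) \<Rightarrow> 'v set \<Rightarrow> 'e set" where
  "CS C S = (\<Union>i\<in>S. C i)"

definition F :: "('v \<Rightarrow> 'e set) \<Rightarrow> 'v set \<Rightarrow> 'e set \<Rightarrow> nat" where
  "F C S T = card (CS C S \<inter> T)"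

definition set_cover :: "'v set \<Rightarrow> 'e set \<Rightarrow> ('v \<Rightarrow> 'e set) \<Rightarrow> 'v set \<Rightarrow> bool" where
  "set_cover V E C S \<longleftrightarrow> S \<subseteq> V \<and> CS C S = E"

definition n_star :: "'v set \<Rightarrow> 'e set \<Rightarrow> ('v \<Rightarrow> 'e set) \<Rightarrow> nat" where
  "n_star V E C = Min {card S | S. set_cover V E C S}"

definition set_packing :: "'v set \<Rightarrow> 'e set \<Rightarrow> ('v \<Rightarrow> 'e set) \<Rightarrow> 'e set \<Rightarrow> bool" where
  "set_packing V E C T \<longleftrightarrow> T \<subseteq> E \<and> (\<forall>i\<in>V. card (C i \<inter> T) \<le> 1)"

definition m_star :: "'v set \<Rightarrow> 'e set \<Rightarrow> ('v \<Rightarrow> 'e set) \<Rightarrow> nat" where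
  "m_star V E C = Max {card T | T. set_packing V E C T}"

definition A1 :: "'v set \<Rightarrow> nat \<Rightarrow> 'v set set" where
  "A1 V b1 = {S. S \<subseteq> V \<and> card S \<le> b1}"

definition A2 :: "'e set \<Rightarrow> nat \<Rightarrow> 'e set set" where
  "A2 E b2 = {T. T \<subseteq> E \<and> card T \<le> b2}"

definition U1 :: "('v \<Rightarrow> 'e set) \<Rightarrow> 'v set pmf \<Rightarrow> 'e set pmf \<Rightarrow> real" where
  "U1 C \<sigma>1 \<sigma>2 = measure_pmf.expectation (pair_pmf \<sigma>1 \<sigma>2) (\<lambda>(S, T). real (F C S T))"

definition U2 :: "('v \<Rightarrow> 'e set) \<Rightarrow> 'v set pmf \<Rightarrow> 'e set pmf \<Rightarrow> real" where
  "U2 C \<sigma>1 \<sigma>2 = measure_pmf.expectation \<sigma>2 (\<lambda>T. real (card T)) - U1 C \<sigma>1 \<sigma>2"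

definition is_NE :: "'v set \<Rightarrow> 'e set \<Rightarrow> ('v \<Rightarrow> 'e set) \<Rightarrow> nat \<Rightarrow> nat \<Rightarrow>
    'v set pmf \<Rightarrow> 'e set pmf \<Rightarrow> bool" where
  "is_NE V E C b1 b2 \<sigma>1 \<sigma>2 \<longleftrightarrow>
     set_pmf \<sigma>1 \<subseteq> A1 V b1 \<and> set_pmf \<sigma>2 \<subseteq> A2 E b2 \<and>
     (\<forall>\<tau>1. set_pmf \<tau>1 \<subseteq> A1 V b1 \<longrightarrow> U1 C \<tau>1 \<sigma>2 \<le> U1 C \<sigma>1 \<sigma>2) \<and>
     (\<forall>\<tau>2. set_pmf \<tau>2 \<subseteq> A2 E b2 \<longrightarrow> U2 C \<sigma>1 \<tau>2 \<le> U2 C \<sigma>1 \<sigma>2)"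

definition rate :: "('v \<Rightarrow> 'e set) \<Rightarrow> 'v set pmf \<Rightarrow> 'e set pmf \<Rightarrow> real" where
  "rate C \<sigma>1 \<sigma>2 = measure_pmf.expectation (pair_pmf \<sigma>1 \<sigma>2)
      (\<lambda>(S, T). real (F C S T) / real (card T))"

end

theory Submission
  imports Defs
begin

text \<open>Let \<open>\<mu>\<close> be the smallest probability with which the defense \<open>\<sigma>1\<close> of an equilibrium detects an
  edge. When \<open>b2 < m\<^sup>*\<close>, no edge escaping some defense plan is attacked with certainty: the
  defender could then gain by swapping nodes until its value reaches \<open>b1\<close>, whereas the attacker
  could keep that value below \<open>b1\<close> by confining a full-budget attack to a maximum set
  packing. By the attacker's best responses, attacked edges are therefore detected with
  probability exactly \<open>\<mu>\<close>, and if \<open>\<mu> < 1\<close> (which holds when \<open>b1 < n\<^sup>*\<close>) more than \<open>b2\<close> edges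
  attain \<open>\<mu>\<close>, so that every attack plan uses its full budget. This gives \<open>r(\<sigma>) = \<mu>\<close> and
  \<open>U\<^sub>1 = b2 \<mu>\<close>. Finally, a defense guaranteeing more than \<open>\<mu>\<close> on every edge would detect more
  against these attacks, so \<open>\<mu>\<close> is the maximin detection probability, which depends on \<open>b1\<close> only.\<close>

lemma expectation_finite_support:
  fixes f :: "'a \<Rightarrow> real"
  assumes "finite (set_pmf p)"
  shows "measure_pmf.expectation p f = (\<Sum>x\<in>set_pmf p. f x * pmf p x)"
  by (rule integral_measure_pmf_real) (auto simp: assms)

lemma expectation_pair_pmf_iterated:
  fixes f :: "'a \<Rightarrow> 'b \<Rightarrow> real"
  assumes p: "finite (set_pmf p)" and q: "finite (set_pmf q)"
  shows "measure_pmf.expectation (pair_pmf p q) (\<lambda>(x, y). f x y) =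
         measure_pmf.expectation p (\<lambda>x. measure_pmf.expectation q (\<lambda>y. f x y))"
    and "measure_pmf.expectation (pair_pmf p q) (\<lambda>(x, y). f x y) =
         measure_pmf.expectation q (\<lambda>y. measure_pmf.expectation p (\<lambda>x. f x y))"
proof -
  have fin: "finite (set_pmf (pair_pmf p q))" using p q by simp
  have double_sum: "measure_pmf.expectation (pair_pmf p q) (\<lambda>(x, y). f x y) =
     (\<Sum>x\<in>set_pmf p. \<Sum>y\<in>set_pmf q. f x y * (pmf p x * pmf q y))"
    unfolding expectation_finite_support[OF fin] set_pair_pmf sum.cartesian_product
    by (intro sum.cong refl) (auto simp: pmf_pair)
  show "measure_pmf.expectation (pair_pmf p q) (\<lambda>(x, y). f x y) =
         measure_pmf.expectation p (\<lambda>x. measure_pmf.expectation q (\<lambda>y. f x y))"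
    unfolding double_sum expectation_finite_support[OF p] expectation_finite_support[OF q]
      sum_distrib_right
    by (simp add: mult_ac)
  show "measure_pmf.expectation (pair_pmf p q) (\<lambda>(x, y). f x y) =
         measure_pmf.expectation q (\<lambda>y. measure_pmf.expectation p (\<lambda>x. f x y))"
    unfolding double_sum expectation_finite_support[OF p] expectation_finite_support[OF q]
      sum_distrib_right
    by (subst sum.swap) (simp add: mult_ac)
qed

lemma expectation_cong_support:
  fixes f g :: "'a \<Rightarrow> real"
  assumes "\<And>x. x \<in> set_pmf p \<Longrightarrow> f x = g x"
  shows "measure_pmf.expectation p f = measure_pmf.expectation p g"
  using assms by (intro integral_cong_AE) (auto simp: AE_measure_pmf_iff)

lemma expectation_mono_support:
  fixes f g :: "'a \<Rightarrow> real"
  assumes "finite (set_pmf p)" and "\<And>x. x \<in> set_pmf p \<Longrightarrow> f x \<le> g x"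
  shows "measure_pmf.expectation p f \<le> measure_pmf.expectation p g"
  using assms
  by (intro integral_mono_AE) (auto simp: integrable_measure_pmf_finite AE_measure_pmf_iff)

lemma expectation_eq_const_support:
  fixes f :: "'a \<Rightarrow> real"
  assumes "\<And>x. x \<in> set_pmf p \<Longrightarrow> f x = c"
  shows "measure_pmf.expectation p f = c"
  using expectation_cong_support[of p f "\<lambda>_. c"] assms by simp

lemma expectation_le_const_support:
  fixes f :: "'a \<Rightarrow> real"
  assumes "finite (set_pmf p)" and "\<And>x. x \<in> set_pmf p \<Longrightarrow> f x \<le> c"
  shows "measure_pmf.expectation p f \<le> c"
  using expectation_mono_support[of p f "\<lambda>_. c"] assms by simp

lemma expectation_ge_const_support:
  fixes f :: "'a \<Rightarrow> real"
  assumes "finite (set_pmf p)" and "\<And>x. x \<in> set_pmf p \<Longrightarrow> c \<le> f x"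
  shows "c \<le> measure_pmf.expectation p f"
  using expectation_mono_support[of p "\<lambda>_. c" f] assms by simp

lemma expectation_attains_bound_support:
  fixes f :: "'a \<Rightarrow> real"
  assumes fin: "finite (set_pmf p)" and le: "\<And>x. x \<in> set_pmf p \<Longrightarrow> f x \<le> c"
    and ge: "c \<le> measure_pmf.expectation p f" and x: "x \<in> set_pmf p"
  shows "f x = c"
proof (rule ccontr)
  assume "f x \<noteq> c"
  then have pos: "0 < (c - f x) * pmf p x"
    using le[OF x] x by (auto simp: set_pmf_iff intro!: mult_pos_pos)
  have "(c - f x) * pmf p x \<le> (\<Sum>y\<in>set_pmf p. (c - f y) * pmf p y)"
    using le by (intro member_le_sum) (auto simp: x fin)
  also have "\<dots> = measure_pmf.expectation p (\<lambda>y. c - f y)"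
    by (rule expectation_finite_support[OF fin, symmetric])
  also have "\<dots> = c - measure_pmf.expectation p f"
    using fin by (simp add: integrable_measure_pmf_finite)
  finally show False using pos ge by simp
qed

lemma expectation_ge_point_mass:
  fixes f :: "'a \<Rightarrow> real"
  assumes fin: "finite (set_pmf p)" and nonneg: "\<And>x. x \<in> set_pmf p \<Longrightarrow> 0 \<le> f x"
    and x: "x \<in> set_pmf p"
  shows "f x * pmf p x \<le> measure_pmf.expectation p f"
  unfolding expectation_finite_support[OF fin]
  by (rule member_le_sum) (auto simp: x fin nonneg)

definition detected_on :: "('v \<Rightarrow> 'e set) \<Rightarrow> 'v set pmf \<Rightarrow> 'e set \<Rightarrow> real" where
  "detected_on C \<sigma>1 T = measure_pmf.expectation \<sigma>1 (\<lambda>S. real (F C S T))"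

definition detected_by :: "('v \<Rightarrow> 'e set) \<Rightarrow> 'e set pmf \<Rightarrow> 'v set \<Rightarrow> real" where
  "detected_by C \<sigma>2 S = measure_pmf.expectation \<sigma>2 (\<lambda>T. real (F C S T))"

definition detection_prob :: "('v \<Rightarrow> 'e set) \<Rightarrow> 'v set pmf \<Rightarrow> 'e \<Rightarrow> real" where
  "detection_prob C \<sigma>1 e = detected_on C \<sigma>1 {e}"

definition min_detection_prob :: "('v \<Rightarrow> 'e set) \<Rightarrow> 'v set pmf \<Rightarrow> 'e set \<Rightarrow> real" where
  "min_detection_prob C \<sigma>1 E = Min (detection_prob C \<sigma>1 ` E)"

definition max_min_detection_prob :: "'v set \<Rightarrow> 'e set \<Rightarrow> ('v \<Rightarrow> 'e set) \<Rightarrow> nat \<Rightarrow> real" where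
  "max_min_detection_prob V E C b1 =
     Sup {min_detection_prob C \<tau> E | \<tau>. set_pmf \<tau> \<subseteq> A1 V b1}"

lemma F_singleton: "F C S {e} = (if e \<in> CS C S then 1 else 0)"
  by (auto simp: F_def)

lemma F_eq_sum_singletons:
  assumes "finite T"
  shows "real (F C S T) = (\<Sum>e\<in>T. real (F C S {e}))"
proof -
  have "(\<Sum>e\<in>T. real (F C S {e})) = real (card (T \<inter> CS C S))"
    using assms by (simp add: F_singleton sum.If_cases flip: of_nat_sum)
  then show ?thesis by (simp add: F_def Int_commute)
qed

text \<open>An edge detected by \<open>S\<close> is lost on removing \<open>v\<close> only if \<open>v\<close> is its unique detector in \<open>S\<close>,
  so the losses for distinct \<open>v\<close> are disjoint sets of detected edges.\<close>

lemma sum_removal_losses_le_F: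
  assumes "finite S" and "finite T"
  shows "(\<Sum>v\<in>S. real (F C S T) - real (F C (S - {v}) T)) \<le> real (F C S T)"
proof -
  define X where "X = CS C S \<inter> T"
  define Y where "Y v = CS C (S - {v}) \<inter> T" for v
  have YX: "Y v \<subseteq> X" for v by (auto simp: X_def Y_def CS_def)
  have finX: "finite X" using assms(2) by (simp add: X_def)
  have loss: "real (F C S T) - real (F C (S - {v}) T) = real (card (X - Y v))" for v
    using card_Diff_subset[OF finite_subset[OF YX finX] YX] card_mono[OF finX YX]
    by (simp add: F_def X_def Y_def of_nat_diff)
  have "(\<Sum>v\<in>S. real (F C S T) - real (F C (S - {v}) T)) = real (\<Sum>v\<in>S. card (X - Y v))"
    by (simp add: loss)
  also have "(\<Sum>v\<in>S. card (X - Y v)) = card (\<Union>v\<in>S. X - Y v)"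
    using assms(1) finX by (subst card_UN_disjoint) (auto simp: X_def Y_def CS_def)
  also have "\<dots> \<le> card X" using finX by (intro card_mono) auto
  finally show ?thesis by (simp add: F_def X_def)
qed

lemma U1_eq_expectation_detected_by:
  assumes "finite (set_pmf \<sigma>1)" and "finite (set_pmf \<sigma>2)"
  shows "U1 C \<sigma>1 \<sigma>2 = measure_pmf.expectation \<sigma>1 (detected_by C \<sigma>2)"
  unfolding U1_def detected_by_def by (rule expectation_pair_pmf_iterated(1)[OF assms])

lemma U1_eq_expectation_detected_on:
  assumes "finite (set_pmf \<sigma>1)" and "finite (set_pmf \<sigma>2)"
  shows "U1 C \<sigma>1 \<sigma>2 = measure_pmf.expectation \<sigma>2 (detected_on C \<sigma>1)"
  unfolding U1_def detected_on_def by (rule expectation_pair_pmf_iterated(2)[OF assms])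

lemma rate_eq_expectation_detected_on:
  assumes "finite (set_pmf \<sigma>1)" and "finite (set_pmf \<sigma>2)"
  shows "rate C \<sigma>1 \<sigma>2 = measure_pmf.expectation \<sigma>2 (\<lambda>T. detected_on C \<sigma>1 T / real (card T))"
  unfolding rate_def detected_on_def
  by (simp add: expectation_pair_pmf_iterated(2)[OF assms])

lemma U1_return_pmf_left: "finite (set_pmf \<sigma>2) \<Longrightarrow> U1 C (return_pmf S) \<sigma>2 = detected_by C \<sigma>2 S"
  by (simp add: U1_eq_expectation_detected_by)

lemma U2_return_pmf_right:
  "finite (set_pmf \<sigma>1) \<Longrightarrow> U2 C \<sigma>1 (return_pmf T) = real (card T) - detected_on C \<sigma>1 T"
  by (simp add: U2_def U1_eq_expectation_detected_on)

lemma detected_on_eq_sum: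
  assumes "finite (set_pmf \<sigma>1)" and "finite T"
  shows "detected_on C \<sigma>1 T = (\<Sum>e\<in>T. detection_prob C \<sigma>1 e)"
  unfolding detection_prob_def detected_on_def F_eq_sum_singletons[OF assms(2)]
  using assms(1) by (simp add: integrable_measure_pmf_finite)

lemma detection_prob_bounds:
  assumes "finite (set_pmf \<sigma>1)"
  shows "0 \<le> detection_prob C \<sigma>1 e" and "detection_prob C \<sigma>1 e \<le> 1"
  unfolding detection_prob_def detected_on_def
  by (simp, rule expectation_le_const_support[OF assms]) (simp add: F_singleton)

lemma detection_prob_eq_one_iff:
  assumes "finite (set_pmf \<sigma>1)"
  shows "detection_prob C \<sigma>1 e = 1 \<longleftrightarrow> (\<forall>S\<in>set_pmf \<sigma>1. e \<in> CS C S)"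
proof
  assume one: "detection_prob C \<sigma>1 e = 1"
  show "\<forall>S\<in>set_pmf \<sigma>1. e \<in> CS C S"
  proof
    fix S assume "S \<in> set_pmf \<sigma>1"
    then have "real (F C S {e}) = 1"
      using one by (intro expectation_attains_bound_support[OF assms])
        (auto simp: F_singleton detection_prob_def detected_on_def)
    then show "e \<in> CS C S" by (simp add: F_singleton split: if_splits)
  qed
next
  assume "\<forall>S\<in>set_pmf \<sigma>1. e \<in> CS C S"
  then show "detection_prob C \<sigma>1 e = 1"
    unfolding detection_prob_def detected_on_def
    by (intro expectation_eq_const_support) (simp add: F_singleton)
qed

lemma card_minus_detected_on_eq_sum:
  assumes "finite (set_pmf \<sigma>1)" and "finite T"
  shows "real (card T) - detected_on C \<sigma>1 T = (\<Sum>e\<in>T. 1 - detection_prob C \<sigma>1 e)"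
  using assms by (simp add: detected_on_eq_sum sum_subtractf)

lemma F_set_packing_le_card:
  assumes "set_packing V E C P" and "S \<subseteq> V" and "finite S"
  shows "F C S P \<le> card S"
proof -
  have "F C S P = card (\<Union>i\<in>S. C i \<inter> P)" by (simp add: F_def CS_def)
  also have "\<dots> \<le> (\<Sum>i\<in>S. card (C i \<inter> P))" by (rule card_UN_le[OF assms(3)])
  also have "\<dots> \<le> (\<Sum>i\<in>S. 1)"
    using assms by (intro sum_mono) (auto simp: set_packing_def)
  finally show ?thesis by simp
qed

locale detection_game =
  fixes V :: "'v set" and E :: "'e set" and C :: "'v \<Rightarrow> 'e set"
  assumes model: "detection_model V E C"
begin

lemma finite_V: "finite V" and finite_E: "finite E" and E_nonempty: "E \<noteq> {}"
  and C_subset_E: "i \<in> V \<Longrightarrow> C i \<subseteq> E" and E_covered: "e \<in> E \<Longrightarrow> \<exists>i\<in>V. e \<in> C i"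
  using model by (auto simp: detection_model_def)

lemma finite_set_pmf_A1: "set_pmf \<tau> \<subseteq> A1 V b1 \<Longrightarrow> finite (set_pmf \<tau>)"
  by (rule finite_subset[of _ "Pow V"]) (auto simp: A1_def finite_V)

lemma finite_set_pmf_A2: "set_pmf \<tau> \<subseteq> A2 E b2 \<Longrightarrow> finite (set_pmf \<tau>)"
  by (rule finite_subset[of _ "Pow E"]) (auto simp: A2_def finite_E)

lemma min_detection_prob_le: "e \<in> E \<Longrightarrow> min_detection_prob C \<tau> E \<le> detection_prob C \<tau> e"
  unfolding min_detection_prob_def using finite_E by simp

lemma min_detection_prob_attained: "\<exists>e\<in>E. detection_prob C \<tau> e = min_detection_prob C \<tau> E"
proof -
  have "Min (detection_prob C \<tau> ` E) \<in> detection_prob C \<tau> ` E"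
    using finite_E E_nonempty by (intro Min_in) auto
  then show ?thesis unfolding min_detection_prob_def by force
qed

lemma min_detection_prob_bounds:
  assumes "finite (set_pmf \<tau>)"
  shows "0 \<le> min_detection_prob C \<tau> E" and "min_detection_prob C \<tau> E \<le> 1"
  using min_detection_prob_attained[of \<tau>] detection_prob_bounds[OF assms, of C] by metis+

lemma max_min_detection_prob_bounds:
  "0 \<le> max_min_detection_prob V E C b1" "max_min_detection_prob V E C b1 \<le> 1"
proof -
  let ?X = "{min_detection_prob C \<tau> E | \<tau>. set_pmf \<tau> \<subseteq> A1 V b1}"
  have empty_defense: "min_detection_prob C (return_pmf {}) E \<in> ?X"
    by (auto simp: A1_def)
  have le_one: "x \<le> 1" if "x \<in> ?X" for x
    using that min_detection_prob_bounds(2) finite_set_pmf_A1 by blast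
  have "0 \<le> min_detection_prob C (return_pmf {}) E"
    by (simp add: min_detection_prob_bounds)
  also have "\<dots> \<le> Sup ?X"
    using empty_defense le_one by (intro cSup_upper bdd_aboveI[of _ 1]) auto
  finally show "0 \<le> max_min_detection_prob V E C b1"
    unfolding max_min_detection_prob_def .
  show "max_min_detection_prob V E C b1 \<le> 1"
    unfolding max_min_detection_prob_def using empty_defense le_one by (intro cSup_least) auto
qed

lemma maximum_set_packing_exists: "\<exists>P. set_packing V E C P \<and> card P = m_star V E C"
proof -
  have "{card T | T. set_packing V E C T} \<subseteq> {0..card E}"
    using finite_E by (auto simp: set_packing_def card_mono)
  then have "finite {card T | T. set_packing V E C T}" by (rule finite_subset) simp
  moreover have "set_packing V E C {}" by (simp add: set_packing_def)
  ultimately have "Max {card T | T. set_packing V E C T} \<in> {card T | T. set_packing V E C T}"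
    by (intro Max_in) auto
  then show ?thesis unfolding m_star_def by auto
qed

lemma n_star_le_card_set_cover:
  assumes "set_cover V E C S"
  shows "n_star V E C \<le> card S"
proof -
  have "{card S | S. set_cover V E C S} \<subseteq> card ` Pow V" by (auto simp: set_cover_def)
  then have "finite {card S | S. set_cover V E C S}"
    by (rule finite_subset) (simp add: finite_V)
  then show ?thesis unfolding n_star_def using assms by (intro Min_le) auto
qed

end

locale equilibrium = detection_game V E C
  for V :: "'v set" and E :: "'e set" and C :: "'v \<Rightarrow> 'e set" +
  fixes b1 b2 :: nat and \<sigma>1 :: "'v set pmf" and \<sigma>2 :: "'e set pmf"
  assumes NE: "is_NE V E C b1 b2 \<sigma>1 \<sigma>2"
    and b1_pos: "0 < b1" and b2_pos: "0 < b2" and b2_less_m_star: "b2 < m_star V E C"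
begin

lemma set_pmf_\<sigma>1: "set_pmf \<sigma>1 \<subseteq> A1 V b1" and set_pmf_\<sigma>2: "set_pmf \<sigma>2 \<subseteq> A2 E b2"
  using NE by (auto simp: is_NE_def)

lemma finite_\<sigma>1 [simp]: "finite (set_pmf \<sigma>1)" and finite_\<sigma>2 [simp]: "finite (set_pmf \<sigma>2)"
  using finite_set_pmf_A1[OF set_pmf_\<sigma>1] finite_set_pmf_A2[OF set_pmf_\<sigma>2] .

lemma defense_plan: "S \<in> set_pmf \<sigma>1 \<Longrightarrow> S \<subseteq> V \<and> finite S \<and> card S \<le> b1"
  using set_pmf_\<sigma>1 finite_V by (auto simp: A1_def finite_subset)

lemma attack_plan: "T \<in> set_pmf \<sigma>2 \<Longrightarrow> T \<subseteq> E \<and> finite T \<and> card T \<le> b2"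
  using set_pmf_\<sigma>2 finite_E by (auto simp: A2_def finite_subset)

abbreviation defense_value :: real where
  "defense_value \<equiv> U1 C \<sigma>1 \<sigma>2"

abbreviation \<mu> :: real where
  "\<mu> \<equiv> min_detection_prob C \<sigma>1 E"

lemma detected_by_le_defense_value: "S \<in> A1 V b1 \<Longrightarrow> detected_by C \<sigma>2 S \<le> defense_value"
  using NE unfolding is_NE_def
  by (elim conjE allE[of _ "return_pmf S"]) (simp add: U1_return_pmf_left)

lemma detected_by_eq_defense_value: "S \<in> set_pmf \<sigma>1 \<Longrightarrow> detected_by C \<sigma>2 S = defense_value"
  using set_pmf_\<sigma>1 detected_by_le_defense_value
  by (intro expectation_attains_bound_support) (auto simp: U1_eq_expectation_detected_by)

lemma U2_ge_deviation: "T \<in> A2 E b2 \<Longrightarrow> real (card T) - detected_on C \<sigma>1 T \<le> U2 C \<sigma>1 \<sigma>2"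
  using NE unfolding is_NE_def
  by (elim conjE allE[of _ "return_pmf T"]) (simp add: U2_return_pmf_right)

lemma U2_eq_support: "T \<in> set_pmf \<sigma>2 \<Longrightarrow> real (card T) - detected_on C \<sigma>1 T = U2 C \<sigma>1 \<sigma>2"
  using set_pmf_\<sigma>2 U2_ge_deviation
  by (intro expectation_attains_bound_support)
    (auto simp: U2_def U1_eq_expectation_detected_on integrable_measure_pmf_finite)

lemma attack_deviation:
  assumes "T \<in> set_pmf \<sigma>2" and "T' \<in> A2 E b2"
  shows "(\<Sum>e\<in>T'. 1 - detection_prob C \<sigma>1 e) \<le> (\<Sum>e\<in>T. 1 - detection_prob C \<sigma>1 e)"
proof -
  have "finite T'" using assms(2) finite_E by (auto simp: A2_def finite_subset)
  then show ?thesis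
    using U2_ge_deviation[OF assms(2)] U2_eq_support[OF assms(1)] attack_plan[OF assms(1)]
    by (simp add: card_minus_detected_on_eq_sum)
qed

lemma defense_value_le_detected_on:
  assumes "T \<in> A2 E b2" and "card T = b2"
  shows "defense_value \<le> detected_on C \<sigma>1 T"
proof -
  have "measure_pmf.expectation \<sigma>2 (\<lambda>T. real (card T)) \<le> real b2"
    using attack_plan by (intro expectation_le_const_support) auto
  then show ?thesis using U2_ge_deviation[OF assms(1)] assms(2) by (simp add: U2_def)
qed

lemma detected_by_insert_ge:
  assumes f: "\<forall>T\<in>set_pmf \<sigma>2. f \<in> T" and "f \<in> C i" and "f \<notin> CS C S"
  shows "detected_by C \<sigma>2 S + 1 \<le> detected_by C \<sigma>2 (insert i S)"
proof -
  have "real (F C S T) + 1 \<le> real (F C (insert i S) T)" if T: "T \<in> set_pmf \<sigma>2" for T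
  proof -
    have "finite T" using attack_plan[OF T] by auto
    moreover have "insert f (CS C S \<inter> T) \<subseteq> CS C (insert i S) \<inter> T"
      using f T assms(2) by (auto simp: CS_def)
    ultimately have "card (insert f (CS C S \<inter> T)) \<le> card (CS C (insert i S) \<inter> T)"
      by (intro card_mono) auto
    then show ?thesis using assms(3) \<open>finite T\<close> by (simp add: F_def)
  qed
  then have "measure_pmf.expectation \<sigma>2 (\<lambda>T. real (F C S T) + 1) \<le> detected_by C \<sigma>2 (insert i S)"
    unfolding detected_by_def by (intro expectation_mono_support) auto
  then show ?thesis by (simp add: detected_by_def integrable_measure_pmf_finite)
qed

text \<open>If an edge escaping some defense plan \<open>S\<close> is attacked with certainty, swapping any node
  of \<open>S\<close> for a node monitoring that edge gains at least one detection; summing these gains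
  over the nodes of \<open>S\<close> bounds the defense value from below by the budget.\<close>

lemma defense_value_ge_b1:
  assumes f: "\<forall>T\<in>set_pmf \<sigma>2. f \<in> T" and "f \<in> E" and "detection_prob C \<sigma>1 f < 1"
  shows "real b1 \<le> defense_value"
proof -
  obtain S where S: "S \<in> set_pmf \<sigma>1" "f \<notin> CS C S"
    using assms(3) detection_prob_eq_one_iff[of \<sigma>1 C f] by auto
  obtain i where i: "i \<in> V" "f \<in> C i" using E_covered[OF assms(2)] by auto
  have S_plan: "S \<subseteq> V" "finite S" "card S \<le> b1" using defense_plan[OF S(1)] by auto
  have value_S: "detected_by C \<sigma>2 S = defense_value" by (rule detected_by_eq_defense_value[OF S(1)])
  show ?thesis
  proof (cases "card S < b1")
    case True
    then have "insert i S \<in> A1 V b1" using S_plan i by (auto simp: A1_def card_insert_if)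
    then show ?thesis
      using detected_by_le_defense_value detected_by_insert_ge[OF f i(2) S(2)] value_S by force
  next
    case False
    then have card_S: "card S = b1" using S_plan by simp
    have swap: "1 \<le> detected_by C \<sigma>2 S - detected_by C \<sigma>2 (S - {v})" if v: "v \<in> S" for v
    proof -
      have "f \<notin> CS C (S - {v})" using S(2) by (auto simp: CS_def)
      moreover have "0 < card S" using v S_plan(2) card_gt_0_iff by blast
      then have "insert i (S - {v}) \<in> A1 V b1"
        using v card_S S_plan i by (auto simp: A1_def card_insert_if)
      ultimately show ?thesis
        using detected_by_le_defense_value detected_by_insert_ge[OF f i(2)] value_S by force
    qed
    have "real b1 \<le> (\<Sum>v\<in>S. detected_by C \<sigma>2 S - detected_by C \<sigma>2 (S - {v}))"
      using sum_mono[of S "\<lambda>_. 1", OF swap] card_S by simp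
    also have "\<dots> = measure_pmf.expectation \<sigma>2
        (\<lambda>T. \<Sum>v\<in>S. real (F C S T) - real (F C (S - {v}) T))"
      by (simp add: detected_by_def integrable_measure_pmf_finite)
    also have "\<dots> \<le> detected_by C \<sigma>2 S"
      unfolding detected_by_def using attack_plan S_plan(2)
      by (intro expectation_mono_support sum_removal_losses_le_F) auto
    finally show ?thesis using value_S by simp
  qed
qed

text \<open>Against the bound of the previous lemma, the attacker can place \<open>b2 < m\<^sup>*\<close> edges inside a
  maximum set packing \<open>P\<close>, on which every defense plan detects at most \<open>b1\<close> edges; if some plan
  of \<open>\<sigma>1\<close> detects an edge \<open>a \<in> P\<close>, leaving \<open>a\<close> out pushes the detections strictly below \<open>b1\<close>.\<close>

lemma certainly_attacked_edge_detected:
  assumes f: "\<forall>T\<in>set_pmf \<sigma>2. f \<in> T" and "f \<in> E"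
  shows "detection_prob C \<sigma>1 f = 1"
proof (rule ccontr)
  assume "detection_prob C \<sigma>1 f \<noteq> 1"
  then have "real b1 \<le> defense_value"
    using defense_value_ge_b1[OF f assms(2)] detection_prob_bounds(2)[of \<sigma>1 C f] by simp
  obtain P where P: "set_packing V E C P" "card P = m_star V E C"
    using maximum_set_packing_exists by blast
  have "P \<subseteq> E" using P(1) by (simp add: set_packing_def)
  then have "finite P" using finite_E by (rule finite_subset)
  show False
  proof (cases "\<exists>S\<in>set_pmf \<sigma>1. CS C S \<inter> P \<noteq> {}")
    case False
    obtain T where T: "T \<subseteq> P" "card T = b2"
      using obtain_subset_with_card_n[of b2 P] P(2) b2_less_m_star by auto
    have "T \<in> A2 E b2" using T \<open>P \<subseteq> E\<close> by (auto simp: A2_def)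
    then have "defense_value \<le> detected_on C \<sigma>1 T"
      using T(2) by (rule defense_value_le_detected_on)
    also have "\<dots> \<le> 0"
    proof -
      have "F C S T = 0" if "S \<in> set_pmf \<sigma>1" for S
      proof -
        have "CS C S \<inter> T = {}" using False T(1) that by blast
        then show ?thesis by (simp add: F_def)
      qed
      then show ?thesis
        unfolding detected_on_def by (intro expectation_le_const_support) auto
    qed
    finally show False using \<open>real b1 \<le> defense_value\<close> b1_pos by simp
  next
    case True
    then obtain S1 a where S1: "S1 \<in> set_pmf \<sigma>1" "a \<in> CS C S1" "a \<in> P" by blast
    have "b2 \<le> card (P - {a})" using S1(3) P(2) b2_less_m_star \<open>finite P\<close> by simp
    then obtain T where T: "T \<subseteq> P - {a}" "card T = b2" "finite T"
      by (rule obtain_subset_with_card_n)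
    have "T \<in> A2 E b2" using T \<open>P \<subseteq> E\<close> by (auto simp: A2_def)
    then have "defense_value \<le> detected_on C \<sigma>1 T"
      using T(2) by (rule defense_value_le_detected_on)
    have "real (F C S T) + real (F C S {a}) \<le> real b1" if S: "S \<in> set_pmf \<sigma>1" for S
    proof -
      have "card (CS C S \<inter> T) + card (CS C S \<inter> {a}) = card (CS C S \<inter> T \<union> CS C S \<inter> {a})"
        using T(1) \<open>finite T\<close> by (intro card_Un_disjoint[symmetric]) auto
      also have "\<dots> \<le> F C S P"
        unfolding F_def using T(1) S1(3) \<open>finite P\<close> by (intro card_mono) auto
      also have "\<dots> \<le> b1"
        using F_set_packing_le_card[OF P(1)] defense_plan[OF S] le_trans by blast
      finally show ?thesis unfolding F_def by (simp flip: of_nat_add)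
    qed
    then have "measure_pmf.expectation \<sigma>1 (\<lambda>S. real (F C S T) + real (F C S {a})) \<le> real b1"
      by (intro expectation_le_const_support) auto
    then have "detected_on C \<sigma>1 T + detected_on C \<sigma>1 {a} \<le> real b1"
      by (simp add: detected_on_def integrable_measure_pmf_finite)
    moreover have "real (F C S1 {a}) * pmf \<sigma>1 S1 \<le> detected_on C \<sigma>1 {a}"
      unfolding detected_on_def by (rule expectation_ge_point_mass) (auto simp: S1(1))
    then have "pmf \<sigma>1 S1 \<le> detected_on C \<sigma>1 {a}" using S1(2) by (simp add: F_singleton)
    moreover have "0 < pmf \<sigma>1 S1" using S1(1) by (simp add: pmf_positive)
    ultimately show False
      using \<open>defense_value \<le> detected_on C \<sigma>1 T\<close> \<open>real b1 \<le> defense_value\<close> by linarith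
  qed
qed

lemma attacked_edge_detection_le:
  assumes T: "T \<in> set_pmf \<sigma>2" and "e \<in> T" and "m \<in> E" and "m \<notin> T"
  shows "detection_prob C \<sigma>1 e \<le> detection_prob C \<sigma>1 m"
proof -
  let ?miss = "\<lambda>e. 1 - detection_prob C \<sigma>1 e"
  have T_plan: "T \<subseteq> E" "finite T" "card T \<le> b2" using attack_plan[OF T] by auto
  have "card (insert m (T - {e})) = card T"
    using T_plan(2) assms(2,4) card_Suc_Diff1[OF T_plan(2) assms(2)] by simp
  then have "insert m (T - {e}) \<in> A2 E b2" using T_plan assms(3) by (auto simp: A2_def)
  from attack_deviation[OF T this]
  have "?miss m + sum ?miss (T - {e}) \<le> ?miss e + sum ?miss (T - {e})"
    using T_plan(2) assms(4) sum.remove[OF T_plan(2) assms(2), of ?miss] by simp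
  then show ?thesis by simp
qed

lemma short_attack_plan_avoids_undetected:
  assumes T: "T \<in> set_pmf \<sigma>2" and "card T < b2" and "m \<in> E" and "m \<notin> T"
  shows "detection_prob C \<sigma>1 m = 1"
proof -
  have T_plan: "T \<subseteq> E" "finite T" using attack_plan[OF T] by auto
  then have "insert m T \<in> A2 E b2" using assms by (auto simp: A2_def)
  from attack_deviation[OF T this] have "detection_prob C \<sigma>1 m \<ge> 1"
    using T_plan(2) assms(4) by simp
  then show ?thesis using detection_prob_bounds(2)[of \<sigma>1 C m] by simp
qed

lemma attack_plan_edges_minimally_detected:
  assumes T: "T \<in> set_pmf \<sigma>2" and "m \<in> E" and "m \<notin> T" and "detection_prob C \<sigma>1 m = \<mu>"
    and "e \<in> T"
  shows "detection_prob C \<sigma>1 e = \<mu>"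
proof (rule antisym)
  show "detection_prob C \<sigma>1 e \<le> \<mu>"
    using attacked_edge_detection_le[OF T assms(5,2,3)] assms(4) by simp
  show "\<mu> \<le> detection_prob C \<sigma>1 e"
    using attack_plan[OF T] assms(5) by (intro min_detection_prob_le) auto
qed

lemma attack_plan_card_eq_b2:
  assumes "\<mu> < 1" and T: "T \<in> set_pmf \<sigma>2" and "m \<in> E" and "m \<notin> T"
    and "detection_prob C \<sigma>1 m = \<mu>"
  shows "card T = b2"
proof (rule ccontr)
  assume "card T \<noteq> b2"
  then have "card T < b2" using attack_plan[OF T] by auto
  then show False using short_attack_plan_avoids_undetected[OF T _ assms(3,4)] assms(1,5) by simp
qed

lemma many_minimally_detected_edges:
  assumes "\<mu> < 1"
  shows "b2 < card {e \<in> E. detection_prob C \<sigma>1 e = \<mu>}" (is "_ < card ?M")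
proof -
  obtain m where m: "m \<in> E" "detection_prob C \<sigma>1 m = \<mu>"
    using min_detection_prob_attained by blast
  have "\<not> (\<forall>T\<in>set_pmf \<sigma>2. m \<in> T)"
    using certainly_attacked_edge_detected[OF _ m(1)] m(2) assms by auto
  then obtain T where T: "T \<in> set_pmf \<sigma>2" "m \<notin> T" by blast
  have "T \<subseteq> E" "finite T" using attack_plan[OF T(1)] by auto
  then have "insert m T \<subseteq> ?M"
    using attack_plan_edges_minimally_detected[OF T(1) m(1) T(2) m(2)] m by auto
  then have "card (insert m T) \<le> card ?M" using finite_E by (intro card_mono) auto
  then show ?thesis
    using attack_plan_card_eq_b2[OF assms T(1) m(1) T(2) m(2)] T(2) \<open>finite T\<close> by simp
qed

lemma attack_plan_structure:
  assumes "\<mu> < 1" and T: "T \<in> set_pmf \<sigma>2"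
  shows "card T = b2" and "e \<in> T \<Longrightarrow> detection_prob C \<sigma>1 e = \<mu>"
proof -
  have "finite T" "card T \<le> b2" using attack_plan[OF T] by auto
  moreover have "b2 < card {e \<in> E. detection_prob C \<sigma>1 e = \<mu>}"
    by (rule many_minimally_detected_edges[OF assms(1)])
  ultimately have "\<not> {e \<in> E. detection_prob C \<sigma>1 e = \<mu>} \<subseteq> T"
    using card_mono[OF \<open>finite T\<close>] by (meson le_trans not_le)
  then obtain m where m: "m \<in> E" "m \<notin> T" "detection_prob C \<sigma>1 m = \<mu>" by blast
  show "card T = b2" by (rule attack_plan_card_eq_b2[OF assms m])
  show "e \<in> T \<Longrightarrow> detection_prob C \<sigma>1 e = \<mu>"
    by (rule attack_plan_edges_minimally_detected[OF T m])
qed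

lemma detected_on_attack_plan:
  assumes "\<mu> < 1" and T: "T \<in> set_pmf \<sigma>2"
  shows "detected_on C \<sigma>1 T = real b2 * \<mu>"
proof -
  have "finite T" using attack_plan[OF T] by simp
  then have "detected_on C \<sigma>1 T = (\<Sum>e\<in>T. \<mu>)"
    unfolding detected_on_eq_sum[OF finite_\<sigma>1 \<open>finite T\<close>]
    by (intro sum.cong refl attack_plan_structure(2)[OF assms])
  then show ?thesis using attack_plan_structure(1)[OF assms] by simp
qed

lemma defense_value_eq:
  assumes "\<mu> < 1"
  shows "defense_value = real b2 * \<mu>"
  unfolding U1_eq_expectation_detected_on[OF finite_\<sigma>1 finite_\<sigma>2]
  by (intro expectation_eq_const_support detected_on_attack_plan[OF assms])

lemma rate_eq_min_detection_prob:
  assumes nonempty: "\<forall>T\<in>set_pmf \<sigma>2. T \<noteq> {}"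
  shows "rate C \<sigma>1 \<sigma>2 = \<mu>"
  unfolding rate_eq_expectation_detected_on[OF finite_\<sigma>1 finite_\<sigma>2]
proof (intro expectation_eq_const_support)
  fix T assume T: "T \<in> set_pmf \<sigma>2"
  have T_plan: "T \<subseteq> E" "finite T" using attack_plan[OF T] by auto
  show "detected_on C \<sigma>1 T / real (card T) = \<mu>"
  proof (cases "\<mu> < 1")
    case True
    then show ?thesis
      using detected_on_attack_plan[OF True T] attack_plan_structure(1)[OF True T] b2_pos by simp
  next
    case False
    then have "\<mu> = 1" using min_detection_prob_bounds(2)[OF finite_\<sigma>1] by simp
    then have "detection_prob C \<sigma>1 e = 1" if "e \<in> T" for e
      using min_detection_prob_le[of e \<sigma>1] detection_prob_bounds(2)[of \<sigma>1 C e] that T_plan(1)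
      by force
    then have "detected_on C \<sigma>1 T = real (card T)"
      by (simp add: detected_on_eq_sum[OF finite_\<sigma>1 T_plan(2)])
    moreover have "card T > 0" using nonempty T T_plan(2) by (simp add: card_gt_0_iff)
    ultimately show ?thesis using \<open>\<mu> = 1\<close> by simp
  qed
qed

text \<open>A strategy guaranteeing more detection on every edge would detect more in expectation
  against the full-budget attacks of \<open>\<sigma>2\<close>.\<close>

lemma min_detection_prob_le_equilibrium:
  assumes \<tau>: "set_pmf \<tau> \<subseteq> A1 V b1"
  shows "min_detection_prob C \<tau> E \<le> \<mu>"
proof (cases "\<mu> < 1")
  case False
  then show ?thesis using min_detection_prob_bounds(2)[OF finite_set_pmf_A1[OF \<tau>]] by simp
next
  case True
  have fin: "finite (set_pmf \<tau>)" by (rule finite_set_pmf_A1[OF \<tau>])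
  have "real b2 * min_detection_prob C \<tau> E \<le> U1 C \<tau> \<sigma>2"
    unfolding U1_eq_expectation_detected_on[OF fin finite_\<sigma>2]
  proof (rule expectation_ge_const_support[OF finite_\<sigma>2])
    fix T assume T: "T \<in> set_pmf \<sigma>2"
    have T_plan: "T \<subseteq> E" "finite T" using attack_plan[OF T] by auto
    have "(\<Sum>e\<in>T. min_detection_prob C \<tau> E) \<le> (\<Sum>e\<in>T. detection_prob C \<tau> e)"
      using T_plan(1) by (intro sum_mono min_detection_prob_le) auto
    then show "real b2 * min_detection_prob C \<tau> E \<le> detected_on C \<tau> T"
      using attack_plan_structure(1)[OF True T] by (simp add: detected_on_eq_sum[OF fin T_plan(2)])
  qed
  also have "\<dots> \<le> defense_value" using NE \<tau> by (simp add: is_NE_def)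
  finally show ?thesis using defense_value_eq[OF True] b2_pos by simp
qed

lemma min_detection_prob_eq_max_min: "\<mu> = max_min_detection_prob V E C b1"
  unfolding max_min_detection_prob_def
  using set_pmf_\<sigma>1 min_detection_prob_le_equilibrium
  by (intro cSup_eq_maximum[symmetric]) auto

lemma min_detection_prob_less_one:
  assumes "b1 < n_star V E C"
  shows "\<mu> < 1"
proof (rule ccontr)
  assume "\<not> \<mu> < 1"
  obtain S where S: "S \<in> set_pmf \<sigma>1" using set_pmf_not_empty[of \<sigma>1] by blast
  have "e \<in> CS C S" if "e \<in> E" for e
  proof -
    have "detection_prob C \<sigma>1 e = 1"
      using min_detection_prob_le[OF that, of \<sigma>1] detection_prob_bounds(2)[OF finite_\<sigma>1, of C e]
        \<open>\<not> \<mu> < 1\<close>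
      by linarith
    then show ?thesis using S by (simp add: detection_prob_eq_one_iff)
  qed
  moreover have "CS C S \<subseteq> E" using defense_plan[OF S] C_subset_E by (auto simp: CS_def)
  ultimately have "set_cover V E C S" using defense_plan[OF S] by (auto simp: set_cover_def)
  then show False using n_star_le_card_set_cover defense_plan[OF S] assms by fastforce
qed

lemma full_budget_payoffs:
  assumes "b1 < n_star V E C"
  shows "(\<forall>T\<in>set_pmf \<sigma>2. card T = b2)"
    and "U1 C \<sigma>1 \<sigma>2 = real b2 * max_min_detection_prob V E C b1"
    and "U2 C \<sigma>1 \<sigma>2 = real b2 * (1 - max_min_detection_prob V E C b1)"
proof -
  note less_one = min_detection_prob_less_one[OF assms]
  show cards: "\<forall>T\<in>set_pmf \<sigma>2. card T = b2"
    using attack_plan_structure(1)[OF less_one] by blast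
  show U1: "U1 C \<sigma>1 \<sigma>2 = real b2 * max_min_detection_prob V E C b1"
    using defense_value_eq[OF less_one] min_detection_prob_eq_max_min by simp
  have "measure_pmf.expectation \<sigma>2 (\<lambda>T. real (card T)) = real b2"
    using cards by (intro expectation_eq_const_support) simp
  then show "U2 C \<sigma>1 \<sigma>2 = real b2 * (1 - max_min_detection_prob V E C b1)"
    by (simp add: U2_def U1 algebra_simps)
qed

end

theorem theorem3:
  fixes V :: "'v set" and E :: "'e set" and C :: "'v \<Rightarrow> 'e set"
  assumes "detection_model V E C"
  shows "\<forall>b1::nat. b1 > 0 \<longrightarrow> (\<exists>r::real. 0 \<le> r \<and> r \<le> 1 \<and>
     (\<forall>b2::nat. \<forall>\<sigma>1 \<sigma>2. 0 < b2 \<and> b2 < m_star V E C \<and> is_NE V E C b1 b2 \<sigma>1 \<sigma>2 \<and>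
        (\<forall>T\<in>set_pmf \<sigma>2. T \<noteq> {}) \<longrightarrow> rate C \<sigma>1 \<sigma>2 = r) \<and>
     (b1 < n_star V E C \<longrightarrow>
       (\<forall>b2::nat. \<forall>\<sigma>1 \<sigma>2. 0 < b2 \<and> b2 < m_star V E C \<and> is_NE V E C b1 b2 \<sigma>1 \<sigma>2 \<longrightarrow>
          (\<forall>T\<in>set_pmf \<sigma>2. card T = b2) \<and>
          U1 C \<sigma>1 \<sigma>2 = real b2 * r \<and> U2 C \<sigma>1 \<sigma>2 = real b2 * (1 - r))))"
proof (intro allI impI, goal_cases)
  case (1 b1)
  interpret detection_game V E C by (rule detection_game.intro[OF assms])
  let ?r = "max_min_detection_prob V E C b1"
  have eq: "equilibrium V E C b1 b2 \<sigma>1 \<sigma>2"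
    if "0 < b2 \<and> b2 < m_star V E C \<and> is_NE V E C b1 b2 \<sigma>1 \<sigma>2" for b2 \<sigma>1 \<sigma>2
    using assms that \<open>b1 > 0\<close> by unfold_locales auto
  have rate_eq: "rate C \<sigma>1 \<sigma>2 = ?r"
    if "0 < b2 \<and> b2 < m_star V E C \<and> is_NE V E C b1 b2 \<sigma>1 \<sigma>2" "\<forall>T\<in>set_pmf \<sigma>2. T \<noteq> {}"
    for b2 \<sigma>1 \<sigma>2
    using equilibrium.rate_eq_min_detection_prob[OF eq] equilibrium.min_detection_prob_eq_max_min[OF eq]
      that by simp
  have payoffs_eq: "(\<forall>T\<in>set_pmf \<sigma>2. card T = b2) \<and>
      U1 C \<sigma>1 \<sigma>2 = real b2 * ?r \<and> U2 C \<sigma>1 \<sigma>2 = real b2 * (1 - ?r)"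
    if "b1 < n_star V E C" "0 < b2 \<and> b2 < m_star V E C \<and> is_NE V E C b1 b2 \<sigma>1 \<sigma>2"
    for b2 \<sigma>1 \<sigma>2
    using equilibrium.full_budget_payoffs[OF eq[OF that(2)] that(1)] by blast
  show ?case
    by (rule exI[of _ ?r]) (use max_min_detection_prob_bounds rate_eq payoffs_eq in auto)
qed

end
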